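(* Let $\mathcal{T}$ be a tile set with consistent target frequencies $\{\alpha_T\}_{T\in\mathcal{T}}$, and let $p^*=p^*_{\mathcal{T}}$ be the maximum entropy distribution. For an entry $(i,j)$ write $\mathcal{T}(i,j)=\{T\in\mathcal{T}:(i,j)\in\mathrm{area}(T)\}$. Then $p^*(D)=\prod_{i,j}p^*\big((i,j)=D(i,j)\big)$ for all $D\in\mathcal{D}$, and there exist real numbers $\lambda_T$ ($T\in\mathcal{T}$) such that for every entry $(i,j)$ either $p^*((i,j)=1)\in\{0,1\}$ or \[ p^*((i,j)=1)=\frac{\exp\big(\sum_{T\in\mathcal{T}(i,j)}\lambda_T\big)}{\exp\big(\sum_{T\in\mathcal{T}(i,j)}\lambda_T\big)+1}. \]
   Context: Fix $n,m\ge1$; $\mathcal{D}$ is the set of all $n\times m$ binary matrices. A tile is $T=(t(T),a(T))$ with nonempty $t(T)\subseteq\{1..n\}$, $a(T)\subseteq\{1..m\}$, $\mathrm{area}(T)=t(T)\times a(T)$; $\mathrm{fr}(T;D)=\frac1{|\mathrm{area}(T)|}\sum_{(i,j)\in\mathrm{area}(T)}D(i,j)$, $\mathrm{fr}(T;p)=\sum_D p(D)\mathrm{fr}(T;D)$, $p((i,j)=v)=\sum_{D:D(i,j)=v}p(D)$. Given a finite tile set $\mathcal{T}$ with target frequencies $\alpha_T\in[0,1]$, let $\mathcal{P}=\{p:\mathrm{fr}(T;p)=\alpha_T\ \forall T\in\mathcal{T}\}$; the frequencies are consistent if $\mathcal{P}\neq\emptyset$. The maximum entropy distribution $p^*_{\mathcal{T}}$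 is the (unique) element of $\mathcal{P}$ maximising $H(p)=-\sum_D p(D)\log p(D)$ (natural logarithm, $0\log0=0$). *)

theory Defs
  imports Complex_Main
begin

text \<open>A binary n x m matrix is a function on index pairs, False outside {1..n} x {1..m}.
  A tile is a pair (t, a) of row and column index sets.\<close>

type_synonym matrix = "nat \<times> nat \<Rightarrow> bool"
type_synonym tile = "nat set \<times> nat set"

definition matrices :: "nat \<Rightarrow> nat \<Rightarrow> matrix set" where
  "matrices n m = {D. \<forall>i j. D (i, j) \<longrightarrow> i \<in> {1..n} \<and> j \<in> {1..m}}"

definition valid_tile :: "nat \<Rightarrow> nat \<Rightarrow> tile \<Rightarrow> bool" where
  "valid_tile n m T \<longleftrightarrow> fst T \<noteq> {} \<and> fst T \<subseteq> {1..n} \<and> snd T \<noteq> {} \<and> snd T \<subseteq> {1..m}"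

definition area :: "tile \<Rightarrow> (nat \<times> nat) set" where
  "area T = fst T \<times> snd T"

definition fr_mat :: "tile \<Rightarrow> matrix \<Rightarrow> real" where
  "fr_mat T D = (\<Sum>x\<in>area T. of_bool (D x)) / real (card (area T))"

definition fr_dist :: "nat \<Rightarrow> nat \<Rightarrow> tile \<Rightarrow> (matrix \<Rightarrow> real) \<Rightarrow> real" where
  "fr_dist n m T p = (\<Sum>D\<in>matrices n m. p D * fr_mat T D)"

definition is_distr :: "nat \<Rightarrow> nat \<Rightarrow> (matrix \<Rightarrow> real) \<Rightarrow> bool" where
  "is_distr n m p \<longleftrightarrow> (\<forall>D\<in>matrices n m. 0 \<le> p D) \<and> (\<Sum>D\<in>matrices n m. p D) = 1"

definition marg :: "nat \<Rightarrow> nat \<Rightarrow> (matrix \<Rightarrow> real) \<Rightarrow> nat \<times> nat \<Rightarrow> bool \<Rightarrow> real" where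
  "marg n m p ij v = (\<Sum>D\<in>{D\<in>matrices n m. D ij = v}. p D)"

text \<open>Natural-log entropy; note ln 0 = 0 in Isabelle, so 0 * ln 0 = 0.\<close>
definition entropy :: "nat \<Rightarrow> nat \<Rightarrow> (matrix \<Rightarrow> real) \<Rightarrow> real" where
  "entropy n m p = - (\<Sum>D\<in>matrices n m. p D * ln (p D))"

definition dists_P :: "nat \<Rightarrow> nat \<Rightarrow> tile set \<Rightarrow> (tile \<Rightarrow> real) \<Rightarrow> (matrix \<Rightarrow> real) set" where
  "dists_P n m Ts \<alpha> = {p. is_distr n m p \<and> (\<forall>T\<in>Ts. fr_dist n m T p = \<alpha> T)}"

definition is_maxent :: "nat \<Rightarrow> nat \<Rightarrow> tile set \<Rightarrow> (tile \<Rightarrow> real) \<Rightarrow> (matrix \<Rightarrow> real) \<Rightarrow> bool" where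
  "is_maxent n m Ts \<alpha> p \<longleftrightarrow> p \<in> dists_P n m Ts \<alpha> \<and> (\<forall>q\<in>dists_P n m Ts \<alpha>. entropy n m q \<le> entropy n m p)"

end

theory Submission
  imports Defs
begin

text \<open>Let \<open>x\<close> be the vector of one-entry marginals of the maximum entropy distribution \<open>p\<close>.
  Tile frequencies depend only on \<open>x\<close>, so the product distribution \<open>q\<close> of independent
  Bernoulli(\<open>x\<close>) entries is feasible. Since \<open>ln q\<close> is a sum of functions of single entries,
  \<open>\<Sum> p ln q = \<Sum> q ln q\<close>, and Gibbs' inequality together with \<open>H(q) \<le> H(p)\<close> forces \<open>p = q\<close>.
  On product distributions the entropy is \<open>\<Sum> h(x\<^sub>a)\<close> with \<open>h\<close> the binary entropy, so perturbing
  the marginals strictly inside \<open>(0,1)\<close> along directions that preserve all tile sums yields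
  the stationarity condition: the vector of logits \<open>ln (x\<^sub>a / (1 - x\<^sub>a))\<close> annihilates every such
  direction, hence is a linear combination \<open>\<Sum>\<^sub>T \<lambda>\<^sub>T [a \<in> area T]\<close> of the tile indicators.\<close>

definition matrices_on :: "(nat \<times> nat) set \<Rightarrow> matrix set" where
  "matrices_on G = {D. \<forall>x. D x \<longrightarrow> x \<in> G}"

definition cells :: "nat \<Rightarrow> nat \<Rightarrow> (nat \<times> nat) set" where
  "cells n m = {1..n} \<times> {1..m}"

definition prod_weight :: "(nat \<times> nat) set \<Rightarrow> (nat \<times> nat \<Rightarrow> bool \<Rightarrow> real) \<Rightarrow> matrix \<Rightarrow> real" where
  "prod_weight G f D = (\<Prod>x\<in>G. f x (D x))"

definition bernoulli_product :: "(nat \<times> nat) set \<Rightarrow> (nat \<times> nat \<Rightarrow> real) \<Rightarrow> matrix \<Rightarrow> real" where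
  "bernoulli_product G y = prod_weight G (\<lambda>x v. if v then y x else 1 - y x)"

definition bin_entropy :: "real \<Rightarrow> real" where
  "bin_entropy x = - (x * ln x + (1 - x) * ln (1 - x))"

definition logit :: "real \<Rightarrow> real" where
  "logit x = ln (x / (1 - x))"

lemma matrices_eq_matrices_on_cells: "matrices n m = matrices_on (cells n m)"
  unfolding matrices_def matrices_on_def cells_def by auto

lemma matrices_on_eq_image_Pow: "matrices_on G = (\<lambda>S x. x \<in> S) ` Pow G"
proof
  show "matrices_on G \<subseteq> (\<lambda>S x. x \<in> S) ` Pow G"
  proof
    fix D assume "D \<in> matrices_on G"
    then have "D = (\<lambda>x. x \<in> {y. D y})" "{y. D y} \<in> Pow G" by (auto simp: matrices_on_def)
    then show "D \<in> (\<lambda>S x. x \<in> S) ` Pow G" by blast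
  qed
qed (auto simp: matrices_on_def)

lemma finite_matrices_on: "finite G \<Longrightarrow> finite (matrices_on G)"
  by (simp add: matrices_on_eq_image_Pow)

lemma finite_matrices: "finite (matrices n m)"
  by (simp add: matrices_eq_matrices_on_cells cells_def finite_matrices_on)

lemma sum_split_by_entry:
  assumes "finite M"
  shows "(\<Sum>D\<in>M. h D (D x)) = (\<Sum>D\<in>{D\<in>M. D x}. h D True) + (\<Sum>D\<in>{D\<in>M. \<not> D x}. h D False)"
proof -
  have "(\<Sum>D\<in>M. h D (D x)) = (\<Sum>D\<in>{D\<in>M. D x}. h D (D x)) + (\<Sum>D\<in>{D\<in>M. \<not> D x}. h D (D x))"
    using assms by (subst sum.union_disjoint[symmetric]) (auto intro: sum.cong)
  also have "\<dots> = (\<Sum>D\<in>{D\<in>M. D x}. h D True) + (\<Sum>D\<in>{D\<in>M. \<not> D x}. h D False)"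
    by (intro arg_cong2[where f = "(+)"] sum.cong) auto
  finally show ?thesis .
qed

subsection \<open>Product distributions\<close>

lemma sum_prod_weight:
  assumes "finite G"
  shows "(\<Sum>D\<in>matrices_on G. prod_weight G f D) = (\<Prod>x\<in>G. f x True + f x False)"
proof -
  have inj: "inj_on (\<lambda>S x. x \<in> S) (Pow G)"
    by (rule inj_onI) (metis Collect_mem_eq)
  have "(\<Sum>D\<in>matrices_on G. prod_weight G f D) = (\<Sum>S\<in>Pow G. prod_weight G f (\<lambda>x. x \<in> S))"
    unfolding matrices_on_eq_image_Pow by (simp add: sum.reindex[OF inj])
  also have "\<dots> = (\<Sum>S\<in>Pow G. (\<Prod>x\<in>S. f x True) * (\<Prod>x\<in>G - S. f x False))"
  proof (rule sum.cong[OF refl])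
    fix S assume S: "S \<in> Pow G"
    have "prod_weight G f (\<lambda>x. x \<in> S) = (\<Prod>x\<in>S. f x (x \<in> S)) * (\<Prod>x\<in>G - S. f x (x \<in> S))"
      unfolding prod_weight_def using S assms
      by (metis PowD finite_subset prod.subset_diff mult.commute)
    also have "\<dots> = (\<Prod>x\<in>S. f x True) * (\<Prod>x\<in>G - S. f x False)"
      by (intro arg_cong2[where f = "(*)"] prod.cong) auto
    finally show "prod_weight G f (\<lambda>x. x \<in> S) = \<dots>" .
  qed
  also have "\<dots> = (\<Prod>x\<in>G. f x True + f x False)"
    by (rule prod_add[symmetric, OF assms])
  finally show ?thesis .
qed

lemma sum_prod_weight_entry:
  assumes "finite G" "a \<in> G" "\<forall>x\<in>G. f x True + f x False = 1"
  shows "(\<Sum>D\<in>{D\<in>matrices_on G. D a = v}. prod_weight G f D) = f a v"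
proof -
  define f' where "f' = (\<lambda>x w. if x = a \<and> w \<noteq> v then 0 else f x w)"
  have "prod_weight G f' D = (if D a = v then prod_weight G f D else 0)" for D
    unfolding prod_weight_def f'_def using assms(1,2)
    by (auto intro!: prod.cong simp: prod_zero_iff)
  then have "(\<Sum>D\<in>{D\<in>matrices_on G. D a = v}. prod_weight G f D) = (\<Sum>D\<in>matrices_on G. prod_weight G f' D)"
    using finite_matrices_on[OF assms(1)] by (simp add: sum.inter_filter)
  also have "\<dots> = (f' a True + f' a False) * (\<Prod>x\<in>G - {a}. f' x True + f' x False)"
    using assms(1,2) by (simp add: sum_prod_weight prod.remove)
  also have "(\<Prod>x\<in>G - {a}. f' x True + f' x False) = 1"
    using assms(3) by (intro prod.neutral) (auto simp: f'_def)
  finally show ?thesis by (cases v) (auto simp: f'_def)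
qed

lemma bernoulli_product_nonneg:
  "\<forall>x\<in>G. 0 \<le> y x \<and> y x \<le> 1 \<Longrightarrow> 0 \<le> bernoulli_product G y D"
  unfolding bernoulli_product_def prod_weight_def by (intro prod_nonneg) auto

lemma sum_bernoulli_product: "finite G \<Longrightarrow> (\<Sum>D\<in>matrices_on G. bernoulli_product G y D) = 1"
  unfolding bernoulli_product_def by (simp add: sum_prod_weight)

lemma marginal_bernoulli_product:
  "finite G \<Longrightarrow> a \<in> G \<Longrightarrow> (\<Sum>D\<in>{D\<in>matrices_on G. D a}. bernoulli_product G y D) = y a"
  unfolding bernoulli_product_def using sum_prod_weight_entry[where v = True] by simp

lemma cross_entropy_bernoulli_product:
  assumes G: "finite G" and y: "\<forall>a\<in>G. 0 \<le> y a \<and> y a \<le> 1"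
    and sum_p: "(\<Sum>D\<in>matrices_on G. p D) = 1"
    and marg_p: "\<forall>a\<in>G. (\<Sum>D\<in>{D\<in>matrices_on G. D a}. p D) = y a"
    and supp: "\<forall>D\<in>matrices_on G. p D \<noteq> 0 \<longrightarrow> bernoulli_product G y D \<noteq> 0"
  shows "(\<Sum>D\<in>matrices_on G. p D * ln (bernoulli_product G y D)) = - (\<Sum>a\<in>G. bin_entropy (y a))"
proof -
  define f where "f = (\<lambda>a v. if v then y a else 1 - y a)"
  have fin: "finite (matrices_on G)" using finite_matrices_on[OF G] .
  have "(\<Sum>D\<in>matrices_on G. p D * ln (bernoulli_product G y D))
      = (\<Sum>D\<in>matrices_on G. \<Sum>a\<in>G. p D * ln (f a (D a)))"
  proof (rule sum.cong[OF refl])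
    fix D assume D: "D \<in> matrices_on G"
    show "p D * ln (bernoulli_product G y D) = (\<Sum>a\<in>G. p D * ln (f a (D a)))"
    proof (cases "p D = 0")
      case False
      then have "\<forall>a\<in>G. f a (D a) \<noteq> 0"
        using supp D G by (auto simp: bernoulli_product_def prod_weight_def f_def)
      then have "\<forall>a\<in>G. f a (D a) > 0"
        using y by (auto simp: f_def less_le)
      then have "ln (bernoulli_product G y D) = (\<Sum>a\<in>G. ln (f a (D a)))"
        using G unfolding bernoulli_product_def prod_weight_def f_def by (intro ln_prod) auto
      then show ?thesis by (simp add: sum_distrib_left)
    qed simp
  qed
  also have "\<dots> = (\<Sum>a\<in>G. \<Sum>D\<in>matrices_on G. p D * ln (f a (D a)))"
    by (rule sum.swap)
  also have "\<dots> = (\<Sum>a\<in>G. - bin_entropy (y a))"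
  proof (rule sum.cong[OF refl])
    fix a assume a: "a \<in> G"
    have "(\<Sum>D\<in>{D\<in>matrices_on G. \<not> D a}. p D) = 1 - y a"
      using sum_split_by_entry[OF fin, of "\<lambda>D v. p D" a] sum_p marg_p a by simp
    moreover have "(\<Sum>D\<in>{D\<in>matrices_on G. D a}. p D) = y a" using marg_p a by simp
    ultimately show "(\<Sum>D\<in>matrices_on G. p D * ln (f a (D a))) = - bin_entropy (y a)"
      using sum_split_by_entry[OF fin, of "\<lambda>D v. p D * ln (f a v)" a]
      by (simp add: f_def bin_entropy_def sum_distrib_right[symmetric])
  qed
  finally show ?thesis by (simp add: sum_negf)
qed

lemma entropy_bernoulli_product:
  assumes "finite G" "\<forall>a\<in>G. 0 \<le> y a \<and> y a \<le> 1"
  shows "- (\<Sum>D\<in>matrices_on G. bernoulli_product G y D * ln (bernoulli_product G y D))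
    = (\<Sum>a\<in>G. bin_entropy (y a))"
  using cross_entropy_bernoulli_product[OF assms sum_bernoulli_product[OF assms(1)]]
    marginal_bernoulli_product[OF assms(1)] by simp

subsection \<open>Gibbs' inequality with its equality case\<close>

lemma gibbs_term_nonneg:
  fixes p q :: real
  assumes "0 \<le> p" "0 \<le> q" "p \<noteq> 0 \<longrightarrow> q \<noteq> 0"
  shows "0 \<le> q - p - p * (ln q - ln p)"
    and "q - p - p * (ln q - ln p) = 0 \<Longrightarrow> p = q"
proof -
  consider "p = 0" | "0 < p" "0 < q" using assms by linarith
  then have "0 \<le> q - p - p * (ln q - ln p) \<and> (q - p - p * (ln q - ln p) = 0 \<longrightarrow> p = q)"
  proof cases
    case 2
    have l: "ln q - ln p = ln (q / p)" using 2 by (simp add: ln_div)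
    have "p * ln (q / p) \<le> p * (q / p - 1)"
      using 2 by (intro mult_left_mono ln_le_minus_one) auto
    also have "\<dots> = q - p" using 2 by (simp add: field_simps)
    finally have ge: "0 \<le> q - p - p * ln (q / p)" by simp
    have "p = q" if "q - p - p * ln (q / p) = 0"
    proof -
      have "ln (q / p) = q / p - 1" using that 2 by (simp add: field_simps)
      then have "q / p = 1" using 2 by (intro ln_eq_minus_one) auto
      then show "p = q" using 2 by simp
    qed
    with ge show ?thesis unfolding l by blast
  qed (use assms in auto)
  then show "0 \<le> q - p - p * (ln q - ln p)" and "q - p - p * (ln q - ln p) = 0 \<Longrightarrow> p = q"
    by auto
qed

lemma gibbs_equality:
  fixes p q :: "'a \<Rightarrow> real"
  assumes S: "finite S" and p: "\<forall>x\<in>S. 0 \<le> p x" and q: "\<forall>x\<in>S. 0 \<le> q x"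
    and supp: "\<forall>x\<in>S. p x \<noteq> 0 \<longrightarrow> q x \<noteq> 0" and sums: "sum p S = sum q S"
    and le: "(\<Sum>x\<in>S. p x * ln (p x)) \<le> (\<Sum>x\<in>S. p x * ln (q x))"
  shows "\<forall>x\<in>S. p x = q x"
proof -
  define e where "e x = q x - p x - p x * (ln (q x) - ln (p x))" for x
  have e_nonneg: "\<forall>x\<in>S. 0 \<le> e x"
    using gibbs_term_nonneg(1) p q supp by (simp add: e_def)
  have "sum e S = - ((\<Sum>x\<in>S. p x * ln (q x)) - (\<Sum>x\<in>S. p x * ln (p x)))"
    using sums by (simp add: e_def sum_subtractf right_diff_distrib)
  moreover have "0 \<le> sum e S" using e_nonneg by (simp add: sum_nonneg)
  ultimately have "sum e S = 0" using le by linarith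
  then have "\<forall>x\<in>S. e x = 0"
    using sum_nonneg_eq_0_iff[OF S] e_nonneg by blast
  then show ?thesis
    using gibbs_term_nonneg(2) p q supp by (simp add: e_def)
qed

subsection \<open>Functionals vanishing on a common kernel\<close>

lemma exists_coeff_eliminating_functional:
  fixes r :: "'t \<Rightarrow> 'a \<Rightarrow> real" and g :: "'a \<Rightarrow> real"
  assumes g: "\<forall>d. (\<forall>T\<in>insert s S. (\<Sum>a\<in>X. d a * r T a) = 0) \<longrightarrow> (\<Sum>a\<in>X. d a * g a) = 0"
  shows "\<exists>c. \<forall>d. (\<forall>T\<in>S. (\<Sum>a\<in>X. d a * r T a) = 0) \<longrightarrow> (\<Sum>a\<in>X. d a * (g a - c * r s a)) = 0"
proof (cases "\<exists>d0. (\<forall>T\<in>S. (\<Sum>a\<in>X. d0 a * r T a) = 0) \<and> (\<Sum>a\<in>X. d0 a * r s a) = 1")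
  case False
  have rs: "(\<Sum>a\<in>X. d a * r s a) = 0" if dS: "\<forall>T\<in>S. (\<Sum>a\<in>X. d a * r T a) = 0" for d
  proof (rule ccontr)
    assume k: "(\<Sum>a\<in>X. d a * r s a) \<noteq> 0"
    define d0 where "d0 a = d a / (\<Sum>a\<in>X. d a * r s a)" for a
    have "\<forall>T\<in>S. (\<Sum>a\<in>X. d0 a * r T a) = 0" "(\<Sum>a\<in>X. d0 a * r s a) = 1"
      using dS k by (simp_all add: d0_def sum_divide_distrib[symmetric])
    then show False using False by blast
  qed
  show ?thesis
  proof (intro exI[of _ 0] allI impI)
    fix d assume dS: "\<forall>T\<in>S. (\<Sum>a\<in>X. d a * r T a) = 0"
    then have "\<forall>T\<in>insert s S. (\<Sum>a\<in>X. d a * r T a) = 0" using rs by simp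
    then have "(\<Sum>a\<in>X. d a * g a) = 0" using g by blast
    then show "(\<Sum>a\<in>X. d a * (g a - 0 * r s a)) = 0" by simp
  qed
next
  case True
  then obtain d0 where d0S: "\<forall>T\<in>S. (\<Sum>a\<in>X. d0 a * r T a) = 0"
    and d0s: "(\<Sum>a\<in>X. d0 a * r s a) = 1" by blast
  define c where "c = (\<Sum>a\<in>X. d0 a * g a)"
  have "(\<Sum>a\<in>X. d a * (g a - c * r s a)) = 0"
    if dS: "\<forall>T\<in>S. (\<Sum>a\<in>X. d a * r T a) = 0" for d
  proof -
    define t where "t = (\<Sum>a\<in>X. d a * r s a)"
    have lin: "(\<Sum>a\<in>X. (d a - t * d0 a) * h a) = (\<Sum>a\<in>X. d a * h a) - t * (\<Sum>a\<in>X. d0 a * h a)"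
      for h :: "'a \<Rightarrow> real"
      by (simp add: algebra_simps sum_subtractf sum_distrib_left)
    have "\<forall>T\<in>insert s S. (\<Sum>a\<in>X. (d a - t * d0 a) * r T a) = 0"
      using dS d0S d0s by (simp add: lin, simp add: t_def)
    then have "(\<Sum>a\<in>X. (d a - t * d0 a) * g a) = 0"
      using g[rule_format, of "\<lambda>a. d a - t * d0 a"] by blast
    then have "(\<Sum>a\<in>X. d a * g a) = t * c" by (simp add: lin c_def)
    moreover have "(\<Sum>a\<in>X. d a * (g a - c * r s a)) = (\<Sum>a\<in>X. d a * g a) - c * t"
      by (simp add: right_diff_distrib sum_subtractf t_def sum_distrib_left mult.left_commute)
    ultimately show ?thesis by simp
  qed
  then show ?thesis by blast
qed

lemma exists_lincomb_if_common_kernel: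
  fixes r :: "'t \<Rightarrow> 'a \<Rightarrow> real" and g :: "'a \<Rightarrow> real"
  assumes "finite S" "finite X"
    and "\<forall>d. (\<forall>T\<in>S. (\<Sum>a\<in>X. d a * r T a) = 0) \<longrightarrow> (\<Sum>a\<in>X. d a * g a) = 0"
  shows "\<exists>c. \<forall>a\<in>X. g a = (\<Sum>T\<in>S. c T * r T a)"
  using assms(1,3)
proof (induction S arbitrary: g rule: finite_induct)
  case empty
  then have "(\<Sum>a\<in>X. g a * g a) = 0" using empty.prems[rule_format, of g] by simp
  then have "\<forall>a\<in>X. g a * g a = 0" using assms(2) by (simp add: sum_nonneg_eq_0_iff)
  then show ?case by auto
next
  case (insert s S)
  obtain c0 where "\<forall>d. (\<forall>T\<in>S. (\<Sum>a\<in>X. d a * r T a) = 0) \<longrightarrow> (\<Sum>a\<in>X. d a * (g a - c0 * r s a)) = 0"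
    using exists_coeff_eliminating_functional[OF insert.prems] by blast
  then obtain c where c: "\<forall>a\<in>X. g a - c0 * r s a = (\<Sum>T\<in>S. c T * r T a)"
    using insert.IH[of "\<lambda>a. g a - c0 * r s a"] by blast
  have "(\<Sum>T\<in>S. (c(s := c0)) T * r T a) = (\<Sum>T\<in>S. c T * r T a)" for a
    using insert.hyps by (intro sum.cong) auto
  then have "\<forall>a\<in>X. g a = (\<Sum>T\<in>insert s S. (c(s := c0)) T * r T a)"
    using c insert.hyps by (simp add: algebra_simps)
  then show ?case by blast
qed

subsection \<open>The maximum entropy distribution is a product\<close>

lemma marg_False:
  "is_distr n m p \<Longrightarrow> marg n m p a False = 1 - marg n m p a True"
  using sum_split_by_entry[OF finite_matrices, where h = "\<lambda>D v. p D" and x = a]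
  by (simp add: is_distr_def marg_def)

lemma marg_nonneg: "is_distr n m p \<Longrightarrow> 0 \<le> marg n m p a v"
  unfolding is_distr_def marg_def by (auto intro: sum_nonneg)

lemma marg_le_one: "is_distr n m p \<Longrightarrow> marg n m p a True \<le> 1"
  using marg_False[of n m p a] marg_nonneg[of n m p a False] by simp

lemma le_marg:
  assumes "is_distr n m p" "D \<in> matrices n m"
  shows "p D \<le> marg n m p a (D a)"
  unfolding marg_def using assms finite_matrices
  by (intro member_le_sum) (auto simp: is_distr_def)

lemma fr_dist_eq_marginals:
  "fr_dist n m T p = (\<Sum>a\<in>area T. marg n m p a True) / real (card (area T))"
proof -
  have "fr_dist n m T p = (\<Sum>D\<in>matrices n m. \<Sum>a\<in>area T. p D * of_bool (D a)) / real (card (area T))"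
    unfolding fr_dist_def fr_mat_def by (simp add: sum_divide_distrib sum_distrib_left)
  also have "\<dots> = (\<Sum>a\<in>area T. \<Sum>D\<in>matrices n m. p D * of_bool (D a)) / real (card (area T))"
    by (subst sum.swap) simp
  also have "\<dots> = (\<Sum>a\<in>area T. marg n m p a True) / real (card (area T))"
    unfolding marg_def using finite_matrices
    by (simp add: sum.inter_filter[symmetric] of_bool_def if_distrib cong: if_cong)
  finally show ?thesis .
qed

lemma area_subset_cells: "valid_tile n m T \<Longrightarrow> area T \<subseteq> cells n m"
  by (auto simp: valid_tile_def area_def cells_def)

lemma bernoulli_product_in_dists_P:
  assumes tiles: "\<forall>T\<in>Ts. valid_tile n m T" and y: "\<forall>a\<in>cells n m. 0 \<le> y a \<and> y a \<le> 1"
    and sums: "\<forall>T\<in>Ts. (\<Sum>a\<in>area T. y a) = (\<Sum>a\<in>area T. marg n m p a True)"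
    and p: "p \<in> dists_P n m Ts \<alpha>"
  shows "bernoulli_product (cells n m) y \<in> dists_P n m Ts \<alpha>"
proof -
  have fin: "finite (cells n m)" by (simp add: cells_def)
  have "fr_dist n m T (bernoulli_product (cells n m) y) = fr_dist n m T p" if T: "T \<in> Ts" for T
  proof -
    have "area T \<subseteq> cells n m" using tiles T by (simp add: area_subset_cells)
    then have "(\<Sum>a\<in>area T. marg n m (bernoulli_product (cells n m) y) a True) = (\<Sum>a\<in>area T. y a)"
      using marginal_bernoulli_product[OF fin]
      by (intro sum.cong) (auto simp: marg_def matrices_eq_matrices_on_cells)
    then show ?thesis using sums T by (simp add: fr_dist_eq_marginals)
  qed
  then show ?thesis
    using p bernoulli_product_nonneg[OF y] sum_bernoulli_product[OF fin]
    by (auto simp: dists_P_def is_distr_def matrices_eq_matrices_on_cells)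
qed

lemma maxent_bin_entropy_le:
  assumes "is_maxent n m Ts \<alpha> p" "\<forall>T\<in>Ts. valid_tile n m T"
    and y: "\<forall>a\<in>cells n m. 0 \<le> y a \<and> y a \<le> 1"
    and "\<forall>T\<in>Ts. (\<Sum>a\<in>area T. y a) = (\<Sum>a\<in>area T. marg n m p a True)"
  shows "(\<Sum>a\<in>cells n m. bin_entropy (y a)) \<le> entropy n m p"
proof -
  have "entropy n m (bernoulli_product (cells n m) y) \<le> entropy n m p"
    using assms(1) bernoulli_product_in_dists_P[OF assms(2) y assms(4)]
    by (auto simp: is_maxent_def)
  then show ?thesis
    using entropy_bernoulli_product[OF _ y]
    by (simp add: entropy_def matrices_eq_matrices_on_cells cells_def)
qed

lemma maxent_eq_bernoulli_product:
  assumes maxent: "is_maxent n m Ts \<alpha> p" and tiles: "\<forall>T\<in>Ts. valid_tile n m T"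
  defines "x \<equiv> \<lambda>a. marg n m p a True"
  shows "\<forall>D\<in>matrices n m. p D = bernoulli_product (cells n m) x D"
proof -
  define q where "q = bernoulli_product (cells n m) x"
  have distr: "is_distr n m p" using maxent by (simp add: is_maxent_def dists_P_def)
  have fin: "finite (cells n m)" by (simp add: cells_def)
  have x01: "\<forall>a\<in>cells n m. 0 \<le> x a \<and> x a \<le> 1"
    using marg_nonneg[OF distr] marg_le_one[OF distr] by (simp add: x_def)
  have supp: "\<forall>D\<in>matrices n m. p D \<noteq> 0 \<longrightarrow> q D \<noteq> 0"
  proof (intro ballI impI)
    fix D assume D: "D \<in> matrices n m" and "p D \<noteq> 0"
    then have "0 < p D" using distr by (simp add: is_distr_def less_le)
    then have "0 < (if D a then x a else 1 - x a)" for a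
      using le_marg[OF distr D, of a] marg_False[OF distr, of a]
      by (cases "D a") (auto simp: x_def)
    then show "q D \<noteq> 0"
      by (simp add: q_def bernoulli_product_def prod_weight_def prod_pos less_imp_neq[symmetric])
  qed
  have cross: "(\<Sum>D\<in>matrices n m. p D * ln (q D)) = - (\<Sum>a\<in>cells n m. bin_entropy (x a))"
    unfolding q_def matrices_eq_matrices_on_cells
    using distr supp
    by (intro cross_entropy_bernoulli_product[OF fin x01])
       (auto simp: is_distr_def marg_def x_def matrices_eq_matrices_on_cells q_def)
  have "(\<Sum>a\<in>cells n m. bin_entropy (x a)) \<le> entropy n m p"
    using maxent_bin_entropy_le[OF maxent tiles x01] by (simp add: x_def)
  then have "(\<Sum>D\<in>matrices n m. p D * ln (p D)) \<le> (\<Sum>D\<in>matrices n m. p D * ln (q D))"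
    using cross by (simp add: entropy_def)
  moreover have "\<forall>D\<in>matrices n m. 0 \<le> q D"
    using bernoulli_product_nonneg[OF x01] by (simp add: q_def)
  moreover have "sum p (matrices n m) = sum q (matrices n m)"
    using distr sum_bernoulli_product[OF fin]
    by (simp add: is_distr_def q_def matrices_eq_matrices_on_cells)
  ultimately show ?thesis
    using gibbs_equality[OF finite_matrices _ _ supp] distr unfolding is_distr_def q_def by blast
qed

lemma maxent_entropy_eq:
  assumes "is_maxent n m Ts \<alpha> p" "\<forall>T\<in>Ts. valid_tile n m T"
  shows "entropy n m p = (\<Sum>a\<in>cells n m. bin_entropy (marg n m p a True))"
proof -
  have distr: "is_distr n m p" using assms(1) by (simp add: is_maxent_def dists_P_def)
  have "entropy n m p = entropy n m (bernoulli_product (cells n m) (\<lambda>a. marg n m p a True))"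
    unfolding entropy_def using maxent_eq_bernoulli_product[OF assms] by simp
  then show ?thesis
    using entropy_bernoulli_product marg_nonneg[OF distr] marg_le_one[OF distr]
    by (simp add: entropy_def matrices_eq_matrices_on_cells cells_def)
qed

subsection \<open>Stationarity of the marginals\<close>

lemma bin_entropy_has_real_derivative:
  assumes "0 < x" "x < 1"
  shows "(bin_entropy has_real_derivative - logit x) (at x)"
proof -
  have "logit x = ln x - ln (1 - x)" using assms by (simp add: logit_def ln_div)
  then show ?thesis
    unfolding bin_entropy_def[abs_def] using assms by (auto intro!: derivative_eq_intros)
qed

lemma logistic_logit: "0 < x \<Longrightarrow> x < 1 \<Longrightarrow> exp (logit x) / (exp (logit x) + 1) = x"
  by (simp add: logit_def field_simps)

lemma eventually_perturbation_in_unit_interval: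
  fixes x e :: "'a \<Rightarrow> real"
  assumes "finite I" "\<forall>a\<in>I. 0 < x a \<and> x a < 1"
  shows "\<forall>\<^sub>F t in nhds 0. \<forall>a\<in>I. 0 \<le> x a + t * e a \<and> x a + t * e a \<le> 1"
proof (rule eventually_ball_finite[OF assms(1)], rule ballI)
  fix a assume a: "a \<in> I"
  have "((\<lambda>t. x a + t * e a) \<longlongrightarrow> x a) (nhds 0)"
    by (auto intro!: tendsto_eq_intros filterlim_ident)
  then have "\<forall>\<^sub>F t in nhds 0. 0 < x a + t * e a" "\<forall>\<^sub>F t in nhds 0. x a + t * e a < 1"
    using a assms(2) by (auto dest: order_tendstoD)
  then show "\<forall>\<^sub>F t in nhds 0. 0 \<le> x a + t * e a \<and> x a + t * e a \<le> 1"
    by eventually_elim auto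
qed

lemma sum_bin_entropy_has_real_derivative:
  fixes x e :: "'a \<Rightarrow> real"
  assumes "\<forall>a\<in>A. e a \<noteq> 0 \<longrightarrow> 0 < x a \<and> x a < 1"
  shows "((\<lambda>t. \<Sum>a\<in>A. bin_entropy (x a + t * e a)) has_real_derivative
    (\<Sum>a\<in>A. - logit (x a) * e a)) (at 0)"
proof (rule DERIV_sum)
  fix a assume "a \<in> A"
  show "((\<lambda>t. bin_entropy (x a + t * e a)) has_real_derivative - logit (x a) * e a) (at 0)"
  proof (cases "e a = 0")
    case False
    then have "(bin_entropy has_real_derivative - logit (x a)) (at (x a + 0 * e a))"
      using assms \<open>a \<in> A\<close> by (simp add: bin_entropy_has_real_derivative)
    then show ?thesis by (rule DERIV_chain2) (auto intro!: derivative_eq_intros)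
  qed simp
qed

lemma maxent_stationary:
  assumes maxent: "is_maxent n m Ts \<alpha> p" and tiles: "\<forall>T\<in>Ts. valid_tile n m T"
  defines "x \<equiv> \<lambda>a. marg n m p a True"
  defines "I \<equiv> {a\<in>cells n m. 0 < x a \<and> x a < 1}"
  assumes d: "\<forall>T\<in>Ts. (\<Sum>a\<in>I. d a * of_bool (a \<in> area T)) = 0"
  shows "(\<Sum>a\<in>I. d a * logit (x a)) = 0"
proof -
  define e where "e a = (if a \<in> I then d a else 0)" for a
  define F where "F t = (\<Sum>a\<in>cells n m. bin_entropy (x a + t * e a))" for t
  have distr: "is_distr n m p" using maxent by (simp add: is_maxent_def dists_P_def)
  have fin: "finite (cells n m)" by (simp add: cells_def)
  have I: "finite I" "I \<subseteq> cells n m" using fin by (auto simp: I_def)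
  obtain \<delta> where "0 < \<delta>"
    and \<delta>: "\<And>t. \<bar>0 - t\<bar> < \<delta> \<Longrightarrow> \<forall>a\<in>I. 0 \<le> x a + t * e a \<and> x a + t * e a \<le> 1"
    using eventually_perturbation_in_unit_interval[OF I(1), of x e]
    by (auto simp: I_def eventually_nhds_metric dist_real_def)
  have "F t \<le> F 0" if t: "\<bar>0 - t\<bar> < \<delta>" for t
  proof -
    have "\<forall>a\<in>cells n m. 0 \<le> x a + t * e a \<and> x a + t * e a \<le> 1"
      using \<delta>[OF t] marg_nonneg[OF distr] marg_le_one[OF distr] by (auto simp: e_def x_def)
    moreover have "(\<Sum>a\<in>area T. x a + t * e a) = (\<Sum>a\<in>area T. x a)" if T: "T \<in> Ts" for T
    proof -
      have "finite (area T)"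
        using area_subset_cells tiles T fin by (meson finite_subset)
      then have "(\<Sum>a\<in>area T. e a) = (\<Sum>a\<in>I. d a * of_bool (a \<in> area T))"
        using I(1) by (simp add: e_def sum.If_cases of_bool_def Int_commute if_distrib cong: if_cong)
      then show ?thesis using d T by (simp add: sum.distrib sum_distrib_left[symmetric])
    qed
    ultimately have "F t \<le> entropy n m p"
      unfolding F_def x_def by (intro maxent_bin_entropy_le[OF maxent tiles]) auto
    then show ?thesis by (simp add: F_def maxent_entropy_eq[OF maxent tiles] x_def)
  qed
  moreover have "(F has_real_derivative (\<Sum>a\<in>cells n m. - logit (x a) * e a)) (at 0)"
    unfolding F_def by (rule sum_bin_entropy_has_real_derivative) (auto simp: e_def I_def)
  ultimately have "(\<Sum>a\<in>cells n m. - logit (x a) * e a) = 0"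
    using DERIV_local_max[OF _ \<open>0 < \<delta>\<close>] by blast
  moreover have "(\<Sum>a\<in>cells n m. logit (x a) * e a) = (\<Sum>a\<in>I. d a * logit (x a))"
    using I fin by (intro sum.mono_neutral_cong_right) (auto simp: e_def)
  ultimately show ?thesis by (simp add: sum_negf)
qed

lemma maxent_logits_lincomb:
  assumes "finite Ts" "is_maxent n m Ts \<alpha> p" "\<forall>T\<in>Ts. valid_tile n m T"
  defines "x \<equiv> \<lambda>a. marg n m p a True"
  shows "\<exists>lam. \<forall>a\<in>{a\<in>cells n m. 0 < x a \<and> x a < 1}.
    logit (x a) = (\<Sum>T\<in>Ts. lam T * of_bool (a \<in> area T))"
proof (rule exists_lincomb_if_common_kernel[OF assms(1)])
  show "finite {a\<in>cells n m. 0 < x a \<and> x a < 1}" by (simp add: cells_def)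
  show "\<forall>d. (\<forall>T\<in>Ts. (\<Sum>a\<in>{a\<in>cells n m. 0 < x a \<and> x a < 1}. d a * of_bool (a \<in> area T)) = 0) \<longrightarrow>
      (\<Sum>a\<in>{a\<in>cells n m. 0 < x a \<and> x a < 1}. d a * logit (x a)) = 0"
    using maxent_stationary[OF assms(2,3)] unfolding x_def by blast
qed

lemma maxent_prod_marginals:
  assumes "is_maxent n m Ts \<alpha> p" "\<forall>T\<in>Ts. valid_tile n m T"
  shows "\<forall>D\<in>matrices n m. p D = (\<Prod>a\<in>cells n m. marg n m p a (D a))"
proof
  fix D assume D: "D \<in> matrices n m"
  have distr: "is_distr n m p" using assms(1) by (simp add: is_maxent_def dists_P_def)
  have "p D = bernoulli_product (cells n m) (\<lambda>a. marg n m p a True) D"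
    using maxent_eq_bernoulli_product[OF assms] D by (rule bspec)
  also have "\<dots> = (\<Prod>a\<in>cells n m. marg n m p a (D a))"
    unfolding bernoulli_product_def prod_weight_def
  proof (rule prod.cong[OF refl])
    fix a
    show "(if D a then marg n m p a True else 1 - marg n m p a True) = marg n m p a (D a)"
      using marg_False[OF distr, of a] by (cases "D a") simp_all
  qed
  finally show "p D = (\<Prod>a\<in>cells n m. marg n m p a (D a))" .
qed

theorem theorem2:
  fixes n m :: nat and Ts :: "tile set" and \<alpha> :: "tile \<Rightarrow> real" and p :: "matrix \<Rightarrow> real"
  assumes "n \<ge> 1" and "m \<ge> 1"
    and "finite Ts" and "\<forall>T\<in>Ts. valid_tile n m T"
    and "\<forall>T\<in>Ts. 0 \<le> \<alpha> T \<and> \<alpha> T \<le> 1"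
    and "dists_P n m Ts \<alpha> \<noteq> {}"
    and "is_maxent n m Ts \<alpha> p"
  shows "(\<forall>D\<in>matrices n m. p D = (\<Prod>i\<in>{1..n}. \<Prod>j\<in>{1..m}. marg n m p (i, j) (D (i, j))))
    \<and> (\<exists>lam :: tile \<Rightarrow> real. \<forall>i\<in>{1..n}. \<forall>j\<in>{1..m}.
          marg n m p (i, j) True \<in> {0, 1} \<or>
          marg n m p (i, j) True =
            exp (\<Sum>T\<in>{T\<in>Ts. (i, j) \<in> area T}. lam T) /
            (exp (\<Sum>T\<in>{T\<in>Ts. (i, j) \<in> area T}. lam T) + 1))"
proof -
  define x where "x a = marg n m p a True" for a
  obtain lam where lam: "\<forall>a\<in>{a\<in>cells n m. 0 < x a \<and> x a < 1}.
      logit (x a) = (\<Sum>T\<in>Ts. lam T * of_bool (a \<in> area T))"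
    using maxent_logits_lincomb[OF assms(3,7,4)] unfolding x_def by blast
  have "x a \<in> {0, 1} \<or>
      x a = exp (\<Sum>T\<in>{T\<in>Ts. a \<in> area T}. lam T) / (exp (\<Sum>T\<in>{T\<in>Ts. a \<in> area T}. lam T) + 1)"
    if a: "a \<in> cells n m" for a
  proof (cases "0 < x a \<and> x a < 1")
    case True
    have "(\<Sum>T\<in>{T\<in>Ts. a \<in> area T}. lam T) = (\<Sum>T\<in>Ts. lam T * of_bool (a \<in> area T))"
      using assms(3) by (simp add: sum.inter_filter[symmetric] of_bool_def if_distrib cong: if_cong)
    also have "\<dots> = logit (x a)" using bspec[OF lam, of a] True a by simp
    finally show ?thesis using True by (simp add: logistic_logit)
  next
    case False
    have "is_distr n m p" using assms(7) by (simp add: is_maxent_def dists_P_def)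
    then have "0 \<le> x a" "x a \<le> 1" by (simp_all add: x_def marg_nonneg marg_le_one)
    then show ?thesis using False by auto
  qed
  then show ?thesis
    using maxent_prod_marginals[OF assms(7,4)] unfolding x_def cells_def
    by (intro conjI exI[of _ lam]) (simp_all add: prod.cartesian_product)
qed

end
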